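(* If $\sigma$ and $\pi$ are permutations with the same number of descents, then $\mu(\sigma,\pi)=(-1)^{|\pi|-|\sigma|}\binom{\pi}{\sigma}_n$, where $\binom{\pi}{\sigma}_n$ is the number of normal embeddings of $\sigma$ in $\pi$.
   Context: A permutation of length $n$ is an arrangement $\pi=\pi_1\cdots\pi_n$ of $1,\dots,n$; $|\pi|$ denotes length. The permutation poset is ordered by pattern containment: $\sigma\le\pi$ if $\pi$ has a subsequence in the same relative order as $\sigma$. A descent of $\pi$ is an index $i$ with $\pi_i>\pi_{i+1}$. $\mu$ is the Möbius function of this poset: $\mu(a,a)=1$, $\mu(a,b)=-\sum_{a\le z<b}\mu(a,z)$ for $a<b$, $\mu(a,b)=0$ if $a\not\le b$. An embedding of $\sigma$ in $\pi$ is a sequence $\eta=\eta_1\cdots\eta_{|\pi|}$ of nonnegative integers such that the positions $i$ with $\eta_i\neq0$ form an occurrence of $\sigma$ in $\pi$ (the letters $\pi_i$ at these positions are in the same relative order as $\sigma$) and deleting the zeros from $\eta$ yields $\sigma$. (So embeddings correspond bijectively to occurrences.) An adjacency in $\pi$ is a maximal run of consecutive positions whose letters are consecutive increasing values $c,c+1,\dots$; its tail is all but its first letter. Equivalently, position $i\ge2$ is in the tail of an adjacency iff $\pi_i=\pi_{i-1}+1$. An embedding $\eta$ is normal if $\eta_i\neq0$ for every position $i$ of $\pi$ lying in the tail of an adjacency. *)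

theory Defs
  imports Main
begin

text \<open>Permutations are lists: a permutation of length n is an arrangement of 1..n.
  Positions are 0-indexed in the formalization.\<close>

definition is_perm :: "nat list \<Rightarrow> bool" where
  "is_perm xs \<longleftrightarrow> distinct xs \<and> set xs = {1..length xs}"

definition same_order :: "nat list \<Rightarrow> nat list \<Rightarrow> bool" where
  "same_order xs ys \<longleftrightarrow> length xs = length ys \<and>
     (\<forall>i<length xs. \<forall>j<length xs. (xs ! i < xs ! j) \<longleftrightarrow> (ys ! i < ys ! j))"

definition occurrence :: "nat list \<Rightarrow> nat list \<Rightarrow> nat set \<Rightarrow> bool" where
  "occurrence \<sigma> \<pi> I \<longleftrightarrow> I \<subseteq> {..<length \<pi>} \<and> same_order (nths \<pi> I) \<sigma>"

definition contains :: "nat list \<Rightarrow> nat list \<Rightarrow> bool" where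
  "contains \<sigma> \<pi> \<longleftrightarrow> (\<exists>I. occurrence \<sigma> \<pi> I)"

text \<open>The recursion sums over all
  permutations z with a \<le> z < b; since z < b forces length z < length b for
  permutations, the length guard below is vacuous and only serves termination.\<close>
function pmu :: "nat list \<Rightarrow> nat list \<Rightarrow> int" where
  "pmu a b = (if a = b then 1
     else if contains a b then
       - (\<Sum>z \<in> {z. is_perm z \<and> contains a z \<and> contains z b \<and> z \<noteq> b \<and> length z < length b}. pmu a z)
     else 0)"
  by auto
termination
  by (relation "measure (\<lambda>(a, b). length b)") auto

definition des :: "nat list \<Rightarrow> nat" where
  "des \<pi> = card {i. Suc i < length \<pi> \<and> \<pi> ! i > \<pi> ! Suc i}"

definition embeddings :: "nat list \<Rightarrow> nat list \<Rightarrow> nat list set" where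
  "embeddings \<sigma> \<pi> = {\<eta>. length \<eta> = length \<pi> \<and>
      occurrence \<sigma> \<pi> {i. i < length \<eta> \<and> \<eta> ! i \<noteq> 0} \<and>
      filter (\<lambda>x. x \<noteq> 0) \<eta> = \<sigma>}"

definition in_adj_tail :: "nat list \<Rightarrow> nat \<Rightarrow> bool" where
  "in_adj_tail \<pi> i \<longleftrightarrow> 0 < i \<and> i < length \<pi> \<and> \<pi> ! i = \<pi> ! (i - 1) + 1"

definition normal_embeddings :: "nat list \<Rightarrow> nat list \<Rightarrow> nat list set" where
  "normal_embeddings \<sigma> \<pi> = {\<eta> \<in> embeddings \<sigma> \<pi>. \<forall>i. in_adj_tail \<pi> i \<longrightarrow> \<eta> ! i \<noteq> 0}"

end

theory Submission
  imports Defs "HOL-Library.Sublist" "HOL-Library.Product_Lexorder"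
begin

(* Fix \<pi> of length n and \<sigma> \<le> \<pi> with des \<sigma> = des \<pi>; containment cannot decrease the number
   of descents, so every z in the interval [\<sigma>, \<pi>] has des z = des \<pi>.  Such a z is
   encoded by its descent word: value v gets the label "number of descents of z before
   the position of v".  Then (i) occurrences of z in the restriction of \<pi> to a value set
   are exactly subword occurrences of des_word z in the corresponding subword of
   des_word \<pi>, and (ii) the adjacency tails of \<pi> carry exactly the values whose label
   repeats the label of the previous value.

   Step 1 (tail_occurrence_alt_sum): a sign-reversing recurrence on words
   (subword_alt_sum_eq) shows that the alternating sum, over position sets I of \<pi>
   containing all adjacency tails with z \<le> nths \<pi> I, of (-1)^(n - |I|) equals [z = \<pi>].
   Step 2 (interval_signed_normal_count_sum): grouping these I by the pattern they form,
   and identifying normal embeddings of w with their supports, the same sum is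
   \<Sum> w \<in> [z, \<pi>]. (-1)^(n - |w|) * #normal embeddings of w in \<pi>.
   Step 3: this function of w therefore sums to [z = \<pi>] over upper intervals, while pmu \<sigma>
   sums to [\<sigma> = w] over lower intervals; an abstract "left inverse = right inverse"
   argument (incidence_inverses_agree) identifies pmu \<sigma> \<pi> with the signed count. *)

definition strip_last :: "'a \<Rightarrow> 'a list \<Rightarrow> 'a list" where
  "strip_last a u = (if u \<noteq> [] \<and> last u = a then butlast u else u)"

lemma subseq_snoc_iff: "subseq u (x @ [a]) \<longleftrightarrow> subseq (strip_last a u) x"
proof (cases u rule: rev_exhaust)
  case Nil then show ?thesis by (simp add: strip_last_def)
next
  case (snoc u' b)
  show ?thesis
  proof (cases "b = a")
    case True
    then show ?thesis using snoc by (simp add: strip_last_def subseq_append')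
  next
    case False
    have "subseq (u' @ [b]) (x @ [a]) \<longleftrightarrow> subseq (u' @ [b]) x"
    proof
      assume "subseq (u' @ [b]) (x @ [a])"
      then obtain xs1 xs2 where xs: "u' @ [b] = xs1 @ xs2" "subseq xs1 x" "subseq xs2 [a]"
        unfolding subseq_append_iff by blast
      have "xs2 = [] \<or> xs2 = [a]" using xs(3) by (cases xs2) (auto split: if_splits)
      then show "subseq (u' @ [b]) x" using xs False by auto
    qed (rule subseq_rev_drop_many)
    then show ?thesis using snoc False by (simp add: strip_last_def)
  qed
qed

lemma strip_last_eq_iff:
  "strip_last a u = W \<longleftrightarrow> u = W @ [a] \<or> (u = W \<and> (W = [] \<or> last W \<noteq> a))"
  unfolding strip_last_def by (cases u rule: rev_exhaust) auto

definition repeat_positions :: "(nat \<Rightarrow> 'a) \<Rightarrow> nat \<Rightarrow> nat set" where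
  "repeat_positions l m = {v. 2 \<le> v \<and> v \<le> m \<and> l v = l (v - 1)}"

definition subword_on :: "(nat \<Rightarrow> 'a) \<Rightarrow> nat set \<Rightarrow> nat \<Rightarrow> 'a list" where
  "subword_on l U m = map l (filter (\<lambda>v. v \<in> U) [1..<Suc m])"

definition alt_term :: "(nat \<Rightarrow> 'a) \<Rightarrow> nat \<Rightarrow> 'a list \<Rightarrow> nat set \<Rightarrow> int" where
  "alt_term l m u U =
     (if repeat_positions l m \<subseteq> U \<and> subseq u (subword_on l U m) then (-1) ^ (m - card U) else 0)"

definition subword_alt_sum :: "(nat \<Rightarrow> 'a) \<Rightarrow> nat \<Rightarrow> 'a list \<Rightarrow> int" where
  "subword_alt_sum l m u = (\<Sum>U\<in>Pow {1..m}. alt_term l m u U)"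

lemma sum_Pow_insert:
  assumes "finite A" "a \<notin> A"
  shows "(\<Sum>U\<in>Pow (insert a A). f U) = (\<Sum>U\<in>Pow A. f U) + (\<Sum>U\<in>Pow A. f (insert a U))"
proof -
  have "(\<Sum>U\<in>Pow (insert a A). f U) = (\<Sum>U\<in>Pow A. f U) + (\<Sum>U\<in>insert a ` Pow A. f U)"
    unfolding Pow_insert using assms by (intro sum.union_disjoint) auto
  also have "(\<Sum>U\<in>insert a ` Pow A. f U) = (\<Sum>U\<in>Pow A. f (insert a U))"
    using assms by (intro sum.reindex_cong[where l="insert a"]) (auto simp: inj_on_def)
  finally show ?thesis .
qed

lemma repeat_positions_Suc:
  "repeat_positions l (Suc m) =
     repeat_positions l m \<union> (if 1 \<le> m \<and> l (Suc m) = l m then {Suc m} else {})"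
  by (auto simp: repeat_positions_def le_Suc_eq)

lemma repeat_positions_subset: "repeat_positions l m \<subseteq> {1..m}"
  by (auto simp: repeat_positions_def)

(* A set avoiding position m+1 contributes with the opposite sign to the sum for m,
   unless m+1 is a repeat, which it would have to contain. *)
lemma alt_term_Suc_avoiding:
  assumes U: "U \<subseteq> {1..m}"
  shows "alt_term l (Suc m) u U = (if 1 \<le> m \<and> l (Suc m) = l m then 0 else - alt_term l m u U)"
proof -
  have "card U \<le> m" using card_mono[OF _ U] by simp
  then have "(-1::int) ^ (Suc m - card U) = - ((-1) ^ (m - card U))" by (simp add: Suc_diff_le)
  moreover have "subword_on l U (Suc m) = subword_on l U m" using U by (auto simp: subword_on_def)
  moreover have "Suc m \<notin> U" using U by auto
  ultimately show ?thesis by (auto simp: alt_term_def repeat_positions_Suc)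
qed

lemma alt_term_Suc_containing:
  assumes U: "U \<subseteq> {1..m}"
  shows "alt_term l (Suc m) u (insert (Suc m) U) = alt_term l m (strip_last (l (Suc m)) u) U"
proof -
  have "repeat_positions l (Suc m) \<subseteq> insert (Suc m) U \<longleftrightarrow> repeat_positions l m \<subseteq> U"
    using U repeat_positions_subset[of l m] by (auto simp: repeat_positions_Suc)
  moreover have "subword_on l (insert (Suc m) U) (Suc m) = subword_on l U m @ [l (Suc m)]"
  proof -
    have "filter (\<lambda>v. v \<in> insert (Suc m) U) [1..<Suc m] = filter (\<lambda>v. v \<in> U) [1..<Suc m]"
      by (rule filter_cong) auto
    then show ?thesis by (simp add: subword_on_def)
  qed
  moreover have "card (insert (Suc m) U) = Suc (card U)"
    using U finite_subset[OF U] by (subst card_insert_disjoint) auto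
  ultimately show ?thesis by (simp add: alt_term_def subseq_snoc_iff)
qed

lemma subword_alt_sum_Suc:
  "subword_alt_sum l (Suc m) u =
     (if 1 \<le> m \<and> l (Suc m) = l m then 0 else - subword_alt_sum l m u)
     + subword_alt_sum l m (strip_last (l (Suc m)) u)"
proof -
  have "{1..Suc m} = insert (Suc m) {1..m}" by auto
  then have "subword_alt_sum l (Suc m) u = (\<Sum>U\<in>Pow {1..m}. alt_term l (Suc m) u U)
      + (\<Sum>U\<in>Pow {1..m}. alt_term l (Suc m) u (insert (Suc m) U))"
    unfolding subword_alt_sum_def by (simp only:) (rule sum_Pow_insert, auto)
  also have "(\<Sum>U\<in>Pow {1..m}. alt_term l (Suc m) u U)
      = (\<Sum>U\<in>Pow {1..m}. if 1 \<le> m \<and> l (Suc m) = l m then 0 else - alt_term l m u U)"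
    by (rule sum.cong) (simp_all add: alt_term_Suc_avoiding)
  also have "\<dots> = (if 1 \<le> m \<and> l (Suc m) = l m then 0 else - subword_alt_sum l m u)"
    by (cases "1 \<le> m \<and> l (Suc m) = l m") (auto simp: subword_alt_sum_def sum_negf)
  also have "(\<Sum>U\<in>Pow {1..m}. alt_term l (Suc m) u (insert (Suc m) U))
      = subword_alt_sum l m (strip_last (l (Suc m)) u)"
    unfolding subword_alt_sum_def by (rule sum.cong) (simp_all add: alt_term_Suc_containing)
  finally show ?thesis .
qed

lemma subword_alt_sum_eq: "subword_alt_sum l m u = (if u = map l [1..<Suc m] then 1 else 0)"
proof (induction m arbitrary: u)
  case 0
  then show ?case by (simp add: subword_alt_sum_def alt_term_def repeat_positions_def subword_on_def)
next
  case (Suc m)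
  define W where "W = map l [1..<Suc m]"
  define a where "a = l (Suc m)"
  have W_snoc: "map l [1..<Suc (Suc m)] = W @ [a]" by (simp add: W_def a_def)
  show ?case
  proof (cases "1 \<le> m \<and> a = l m")
    case True
    then have "W \<noteq> [] \<and> last W = a" by (simp add: W_def)
    then show ?thesis using True
      by (simp add: subword_alt_sum_Suc Suc.IH W_snoc flip: W_def a_def) (auto simp: strip_last_eq_iff)
  next
    case False
    then have "W = [] \<or> last W \<noteq> a" by (auto simp: W_def)
    then show ?thesis using False
      by (simp add: subword_alt_sum_Suc Suc.IH W_snoc flip: W_def a_def) (auto simp: strip_last_eq_iff)
  qed
qed

lemma same_order_refl: "same_order x x" by (simp add: same_order_def)
lemma same_order_sym: "same_order x y \<Longrightarrow> same_order y x" by (simp add: same_order_def)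
lemma same_order_trans: "same_order x y \<Longrightarrow> same_order y z \<Longrightarrow> same_order x z"
  by (simp add: same_order_def)
lemma same_order_length: "same_order x y \<Longrightarrow> length x = length y" by (simp add: same_order_def)

lemma same_order_map:
  assumes "\<And>a b. a \<in> set xs \<Longrightarrow> b \<in> set xs \<Longrightarrow> a < b \<Longrightarrow> g a < g b"
  shows "same_order xs (map g xs)"
  unfolding same_order_def
proof (intro conjI allI impI)
  fix i j assume i: "i < length xs" and j: "j < length xs"
  have a: "xs!i \<in> set xs" "xs!j \<in> set xs" using i j by auto
  show "(xs ! i < xs ! j) = (map g xs ! i < map g xs ! j)"
  proof (cases rule: linorder_cases[of "xs!i" "xs!j"])
    case less then show ?thesis using assms[OF a] i j by simp
  next
    case equal then show ?thesis using i j by simp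
  next
    case greater then show ?thesis using assms[OF a(2) a(1)] i j by simp
  qed
qed simp

definition pos_of :: "nat list \<Rightarrow> nat \<Rightarrow> nat" where
  "pos_of x v = (THE i. i < length x \<and> x ! i = v)"

lemma pos_of_nth: "distinct x \<Longrightarrow> i < length x \<Longrightarrow> pos_of x (x ! i) = i"
  unfolding pos_of_def by (rule the_equality) (auto simp: nth_eq_iff_index_eq)

lemma pos_of_in: "distinct x \<Longrightarrow> v \<in> set x \<Longrightarrow> pos_of x v < length x \<and> x ! pos_of x v = v"
proof -
  assume d: "distinct x" and v: "v \<in> set x"
  then obtain i where i: "i < length x" "x ! i = v" by (auto simp: in_set_conv_nth)
  then show ?thesis using pos_of_nth[OF d i(1)] by simp
qed

lemma same_order_ex_map:
  assumes "distinct xs" "same_order xs ys"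
  shows "\<exists>g. (\<forall>a\<in>set xs. \<forall>b\<in>set xs. a < b \<longrightarrow> g a < g b) \<and> ys = map g xs"
proof -
  define g where "g v = ys ! pos_of xs v" for v
  have len: "length ys = length xs" using assms(2) by (simp add: same_order_def)
  have "ys = map g xs"
    by (rule nth_equalityI) (auto simp: len g_def pos_of_nth assms(1))
  moreover have "\<forall>a\<in>set xs. \<forall>b\<in>set xs. a < b \<longrightarrow> g a < g b"
  proof (intro ballI impI)
    fix a b assume a: "a \<in> set xs" and b: "b \<in> set xs" and ab: "a < b"
    have pa: "pos_of xs a < length xs" "xs ! pos_of xs a = a" using pos_of_in[OF assms(1) a] by auto
    have pb: "pos_of xs b < length xs" "xs ! pos_of xs b = b" using pos_of_in[OF assms(1) b] by auto
    have "xs ! pos_of xs a < xs ! pos_of xs b" using pa pb ab by simp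
    moreover have "(xs ! pos_of xs a < xs ! pos_of xs b) = (ys ! pos_of xs a < ys ! pos_of xs b)"
      using assms(2) pa(1) pb(1) unfolding same_order_def by simp
    ultimately show "g a < g b" unfolding g_def by simp
  qed
  ultimately show ?thesis by (intro exI[of _ g]) simp
qed

lemma same_order_nths:
  assumes "distinct xs" "same_order xs ys"
  shows "same_order (nths xs K) (nths ys K)"
proof -
  obtain g where g: "\<forall>a\<in>set xs. \<forall>b\<in>set xs. a < b \<longrightarrow> g a < g b" "ys = map g xs"
    using same_order_ex_map[OF assms] by blast
  show ?thesis unfolding g(2) nths_map
  proof (rule same_order_map)
    fix a b assume ab: "a \<in> set (nths xs K)" "b \<in> set (nths xs K)" "a < b"
    then have "a \<in> set xs" "b \<in> set xs" using in_set_nthsD by fast+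
    then show "g a < g b" using g(1) ab(3) by simp
  qed
qed

lemma perm_nth_card:
  assumes "is_perm x" "i < length x"
  shows "x ! i = card {j. j < length x \<and> x ! j \<le> x ! i}"
proof -
  have d: "distinct x" and s: "set x = {1..length x}" using assms(1) by (auto simp: is_perm_def)
  have "(!) x ` {j. j < length x \<and> x ! j \<le> x ! i} = {v \<in> set x. v \<le> x ! i}"
    by (auto simp: in_set_conv_nth)
  also have "\<dots> = {1..x ! i}" using s assms(2) nth_mem[OF assms(2)] by auto
  finally have "card ((!) x ` {j. j < length x \<and> x ! j \<le> x ! i}) = x ! i" by simp
  moreover have "inj_on ((!) x) {j. j < length x \<and> x ! j \<le> x ! i}"
    using d by (auto simp: inj_on_def nth_eq_iff_index_eq)
  ultimately show ?thesis by (simp add: card_image)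
qed

lemma same_order_perm_eq:
  assumes "is_perm x" "is_perm y" "same_order x y"
  shows "x = y"
proof (rule nth_equalityI)
  show len: "length x = length y" using assms(3) by (simp add: same_order_def)
  fix i assume i: "i < length x"
  have "{j. j < length x \<and> x ! j \<le> x ! i} = {j. j < length y \<and> y ! j \<le> y ! i}"
    using assms(3) i len unfolding same_order_def by (auto simp: not_less[symmetric])
  then show "x ! i = y ! i"
    using perm_nth_card[OF assms(1) i] perm_nth_card[OF assms(2)] i len by simp
qed

lemma nths_cong_len: "(\<And>i. i < length xs \<Longrightarrow> i \<in> A \<longleftrightarrow> i \<in> B) \<Longrightarrow> nths xs A = nths xs B"
proof (induction xs arbitrary: A B)
  case Nil then show ?case by simp
next
  case (Cons x xs)
  have "nths xs {j. Suc j \<in> A} = nths xs {j. Suc j \<in> B}"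
    by (rule Cons.IH) (use Cons.prems in auto)
  moreover have "0 \<in> A \<longleftrightarrow> 0 \<in> B" using Cons.prems by auto
  ultimately show ?case by (simp add: nths_Cons)
qed

lemma nths_distinct_filter:
  assumes "distinct xs"
  shows "nths xs K = filter (\<lambda>v. v \<in> (!) xs ` (K \<inter> {..<length xs})) xs"
proof -
  have "filter (\<lambda>v. v \<in> (!) xs ` (K \<inter> {..<length xs})) xs
      = nths xs {i. i < length xs \<and> xs ! i \<in> (!) xs ` (K \<inter> {..<length xs})}"
    by (rule filter_eq_nths)
  also have "\<dots> = nths xs K"
    by (rule nths_cong_len) (use assms in \<open>auto simp: nth_eq_iff_index_eq\<close>)
  finally show ?thesis by simp
qed

lemma ex_nths_filter:
  assumes "distinct xs"
  shows "(\<exists>K. P (nths xs K)) \<longleftrightarrow> (\<exists>W. P (filter (\<lambda>v. v \<in> W) xs))"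
proof
  assume "\<exists>K. P (nths xs K)"
  then obtain K where "P (nths xs K)" by blast
  then show "\<exists>W. P (filter (\<lambda>v. v \<in> W) xs)" unfolding nths_distinct_filter[OF assms] by blast
next
  assume "\<exists>W. P (filter (\<lambda>v. v \<in> W) xs)"
  then obtain W where "P (filter (\<lambda>v. v \<in> W) xs)" by blast
  then show "\<exists>K. P (nths xs K)" unfolding filter_eq_nths by blast
qed

lemma nths_positions:
  "\<exists>q. strict_mono q \<and> (\<forall>m<length (nths xs I). q m < length xs \<and> nths xs I ! m = xs ! q m)"
proof (induction xs arbitrary: I)
  case Nil
  have "strict_mono (\<lambda>m::nat. m)" by (simp add: strict_mono_def)
  then show ?case by auto
next
  case (Cons x xs)
  obtain q where q: "strict_mono q"
    "\<forall>m<length (nths xs {j. Suc j \<in> I}). q m < length xs \<and> nths xs {j. Suc j \<in> I} ! m = xs ! q m"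
    using Cons.IH by blast
  show ?case
  proof (cases "0 \<in> I")
    case True
    define q' where "q' m = (case m of 0 \<Rightarrow> 0 | Suc m \<Rightarrow> Suc (q m))" for m
    have "strict_mono q'"
      using q(1) unfolding strict_mono_Suc_iff by (auto simp: q'_def split: nat.split)
    moreover have "q' m < length (x # xs) \<and> nths (x # xs) I ! m = (x # xs) ! q' m"
      if "m < length (nths (x # xs) I)" for m
      using q(2) True that by (cases m) (auto simp: nths_Cons q'_def)
    ultimately show ?thesis by blast
  next
    case False
    have "strict_mono (Suc \<circ> q)" using q(1) by (simp add: strict_mono_def)
    moreover have "(Suc \<circ> q) m < length (x # xs) \<and> nths (x # xs) I ! m = (x # xs) ! (Suc \<circ> q) m"
      if "m < length (nths (x # xs) I)" for m
      using q(2) False that by (auto simp: nths_Cons)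
    ultimately show ?thesis by blast
  qed
qed

lemma length_nths_subset: "I \<subseteq> {..<length b} \<Longrightarrow> length (nths b I) = card I"
  by (simp add: length_nths)
     (metis (no_types, lifting) Collect_cong inf.absorb_iff2 Int_def lessThan_iff)

lemma same_order_standardize:
  assumes "distinct x"
  shows "\<exists>w. is_perm w \<and> same_order x w"
proof -
  define g where "g v = card {u \<in> set x. u \<le> v}" for v
  have fin: "finite {u \<in> set x. u \<le> v}" for v by simp
  have mono: "g a < g b" if "a \<in> set x" "b \<in> set x" "a < b" for a b
  proof -
    have m1: "b \<in> {u \<in> set x. u \<le> b}" "b \<notin> {u \<in> set x. u \<le> a}" using that by auto
    have m2: "{u \<in> set x. u \<le> a} \<subseteq> {u \<in> set x. u \<le> b}" using that by auto
    have "{u \<in> set x. u \<le> a} \<subset> {u \<in> set x. u \<le> b}" using m1 m2 by blast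
    then show ?thesis unfolding g_def by (rule psubset_card_mono[OF fin])
  qed
  have so: "same_order x (map g x)" by (rule same_order_map) (use mono in auto)
  have inj: "inj_on g (set x)"
  proof (rule inj_onI)
    fix a b assume "a \<in> set x" "b \<in> set x" "g a = g b"
    then show "a = b" using mono[of a b] mono[of b a] by (cases rule: linorder_cases[of a b]) auto
  qed
  have dw: "distinct (map g x)" using assms inj by (simp add: distinct_map)
  have sub: "g ` set x \<subseteq> {1..length x}"
  proof
    fix t assume "t \<in> g ` set x"
    then obtain v where v: "v \<in> set x" "t = g v" by blast
    have "v \<in> {u \<in> set x. u \<le> v}" using v by simp
    then have "1 \<le> t" using v fin[of v] unfolding g_def by (metis card_0_eq empty_iff less_one not_le)
    moreover have "t \<le> card (set x)" unfolding v(2) g_def by (rule card_mono) auto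
    ultimately show "t \<in> {1..length x}" using distinct_card[OF assms] by simp
  qed
  have "card (g ` set x) = length x" using card_image[OF inj] distinct_card[OF assms] by simp
  then have "g ` set x = {1..length x}" using card_subset_eq[OF _ sub] by simp
  then have "is_perm (map g x)" using dw by (simp add: is_perm_def)
  then show ?thesis using so by blast
qed

definition des_before :: "nat list \<Rightarrow> nat \<Rightarrow> nat" where
  "des_before x i = card {j. j < i \<and> Suc j < length x \<and> x ! Suc j < x ! j}"

lemma finite_des_before_set: "finite {j. j < i \<and> Suc j < length x \<and> x ! Suc j < x ! j}"
  by (rule finite_subset[of _ "{..<i}"]) auto

lemma des_eq_des_before: "des x = des_before x (length x)"
  unfolding des_def des_before_def by (rule arg_cong[where f=card]) auto

lemma des_before_mono: "i \<le> j \<Longrightarrow> des_before x i \<le> des_before x j"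
  unfolding des_before_def by (rule card_mono[OF finite_des_before_set]) auto

lemma des_before_0: "des_before x 0 = 0" by (simp add: des_before_def)

lemma des_before_Suc:
  "des_before x (Suc i) = des_before x i + (if Suc i < length x \<and> x ! Suc i < x ! i then 1 else 0)"
proof (cases "Suc i < length x \<and> x ! Suc i < x ! i")
  case True
  have "{j. j < Suc i \<and> Suc j < length x \<and> x ! Suc j < x ! j}
      = insert i {j. j < i \<and> Suc j < length x \<and> x ! Suc j < x ! j}"
    using True by auto
  then show ?thesis using True finite_des_before_set[of i x] unfolding des_before_def by simp
next
  case False
  have "{j. j < Suc i \<and> Suc j < length x \<and> x ! Suc j < x ! j}
      = {j. j < i \<and> Suc j < length x \<and> x ! Suc j < x ! j}"
    using False by (auto simp: less_Suc_eq)
  then show ?thesis using False unfolding des_before_def by simp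
qed

lemma des_before_le_des: "des_before x i \<le> des x"
  unfolding des_eq_des_before des_before_def by (rule card_mono[OF finite_des_before_set]) auto

lemma des_last: "x \<noteq> [] \<Longrightarrow> des x = des_before x (length x - 1)"
  using des_before_Suc[of x "length x - 1"] by (simp add: des_eq_des_before)

lemma des_before_eq_imp_less:
  assumes "distinct x" "j < length x"
  shows "i < j \<Longrightarrow> des_before x i = des_before x j \<Longrightarrow> x ! i < x ! j"
  using assms(2)
proof (induction j)
  case 0 then show ?case by simp
next
  case (Suc j)
  have "des_before x i \<le> des_before x j" using Suc.prems(1) by (intro des_before_mono) simp
  moreover have "des_before x j \<le> des_before x (Suc j)" by (rule des_before_mono) simp
  ultimately have e: "des_before x j = des_before x (Suc j)" using Suc.prems(2) by simp
  then have "\<not> x ! Suc j < x ! j" using des_before_Suc[of x j] Suc.prems(3) by (simp split: if_splits)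
  moreover have "x ! Suc j \<noteq> x ! j" using assms(1) Suc.prems(3) by (simp add: nth_eq_iff_index_eq)
  ultimately have jj: "x ! j < x ! Suc j" by simp
  show ?case
  proof (cases "i = j")
    case True then show ?thesis using jj by simp
  next
    case False
    then have "i < j" using Suc.prems(1) by simp
    then have "x ! i < x ! j" using Suc.IH Suc.prems e by simp
    then show ?thesis using jj by simp
  qed
qed

lemma des_before_less_if_descent:
  assumes "distinct x" "i < j" "j < length x" "x ! j < x ! i"
  shows "des_before x i < des_before x j"
proof -
  have "des_before x i \<le> des_before x j" using assms(2) by (intro des_before_mono) simp
  moreover have "des_before x i \<noteq> des_before x j"
    using des_before_eq_imp_less[OF assms(1,3,2)] assms(4) by auto
  ultimately show ?thesis by simp
qed

lemma same_order_des_before: "same_order y z \<Longrightarrow> des_before y i = des_before z i"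
  unfolding des_before_def same_order_def by (rule arg_cong[where f=card]) auto

lemma same_order_des: "same_order y z \<Longrightarrow> des y = des z"
  using same_order_des_before[of y z] same_order_length[of y z] by (simp add: des_eq_des_before)

lemma des_before_subsequence:
  assumes d: "distinct x"
    and q1: "\<forall>m<length y. q m < length x \<and> y ! m = x ! q m"
    and q2: "strict_mono q"
  shows "m \<le> m' \<Longrightarrow> m' < length y \<Longrightarrow>
    des_before y m' + des_before x (q m) \<le> des_before y m + des_before x (q m')"
proof (induction m')
  case 0 then show ?case by simp
next
  case (Suc m')
  show ?case
  proof (cases "m = Suc m'")
    case True then show ?thesis by simp
  next
    case False
    then have mm: "m \<le> m'" using Suc.prems by simp
    have IH: "des_before y m' + des_before x (q m) \<le> des_before y m + des_before x (q m')"
      using Suc.IH mm Suc.prems by simp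
    have qq: "q m' < q (Suc m')" "q (Suc m') < length x"
      using q1 Suc.prems strict_monoD[OF q2, of m' "Suc m'"] by auto
    have step:
      "des_before y (Suc m') + des_before x (q m') \<le> des_before y m' + des_before x (q (Suc m'))"
    proof (cases "y ! Suc m' < y ! m'")
      case True
      then have "x ! q (Suc m') < x ! q m'" using q1 Suc.prems by simp
      then have "des_before x (q m') < des_before x (q (Suc m'))"
        using des_before_less_if_descent[OF d qq] by simp
      then show ?thesis using des_before_Suc[of y m'] by simp
    next
      case False
      have "des_before x (q m') \<le> des_before x (q (Suc m'))" using qq by (intro des_before_mono) simp
      then show ?thesis using des_before_Suc[of y m'] False by simp
    qed
    show ?thesis using IH step by simp
  qed
qed

lemma des_subsequence:
  assumes d: "distinct x"
    and q1: "\<forall>m<length y. q m < length x \<and> y ! m = x ! q m"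
    and q2: "strict_mono q"
  shows "des y \<le> des x" and "des y = des x \<Longrightarrow> m < length y \<Longrightarrow> des_before x (q m) = des_before y m"
proof -
  show "des y \<le> des x"
  proof (cases "y = []")
    case True then show ?thesis by (simp add: des_def)
  next
    case False
    let ?L = "length y - 1"
    have "des_before y ?L + des_before x (q 0) \<le> des_before y 0 + des_before x (q ?L)"
      using des_before_subsequence[OF assms, of 0 ?L] False by simp
    then have "des y \<le> des_before x (q ?L)" using des_last[OF False] des_before_0[of y] by simp
    then show ?thesis using des_before_le_des[of x "q ?L"] by simp
  qed
  assume e: "des y = des x" and m: "m < length y"
  then have ne: "y \<noteq> []" by auto
  let ?L = "length y - 1"
  have a: "des_before y ?L + des_before x (q m) \<le> des_before y m + des_before x (q ?L)"
    using des_before_subsequence[OF assms, of m ?L] m by simp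
  have b: "des_before y m + des_before x (q 0) \<le> des_before y 0 + des_before x (q m)"
    using des_before_subsequence[OF assms, of 0 m] m by simp
  have "des_before x (q ?L) \<le> des x" by (rule des_before_le_des)
  then show "des_before x (q m) = des_before y m" using a b e des_last[OF ne] des_before_0[of y] by simp
qed

lemma des_nths: "distinct x \<Longrightarrow> des (nths x I) \<le> des x"
  using nths_positions[of x I] des_subsequence(1) by blast

lemma des_nths_eq:
  assumes "distinct x" "des (nths x I) = des x"
  shows "\<exists>q. \<forall>m<length (nths x I).
           q m < length x \<and> nths x I ! m = x ! q m \<and> des_before x (q m) = des_before (nths x I) m"
proof -
  obtain q where q: "strict_mono q" "\<forall>m<length (nths x I). q m < length x \<and> nths x I ! m = x ! q m"
    using nths_positions[of x I] by blast
  show ?thesis using des_subsequence(2)[OF assms(1) q(2,1) assms(2)] q(2) by (intro exI[of _ q]) simp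
qed

lemma contains_des: "contains a b \<Longrightarrow> distinct b \<Longrightarrow> des a \<le> des b"
  unfolding contains_def occurrence_def
  using same_order_des des_nths by (metis same_order_sym)

lemma contains_length: "contains a b \<Longrightarrow> length a \<le> length b"
proof -
  assume "contains a b"
  then obtain I where I: "I \<subseteq> {..<length b}" "same_order (nths b I) a"
    unfolding contains_def occurrence_def by blast
  have "length a = card I" using same_order_length[OF I(2)] length_nths_subset[OF I(1)] by simp
  also have "\<dots> \<le> length b" using card_mono[OF _ I(1)] by simp
  finally show ?thesis .
qed

lemma contains_refl: "contains x x"
  unfolding contains_def occurrence_def
  by (rule exI[of _ "{..<length x}"]) (simp add: same_order_refl)

lemma contains_trans:
  assumes "contains a b" "contains b c" "distinct c"
  shows "contains a c"
proof -
  obtain I where I: "I \<subseteq> {..<length b}" "same_order (nths b I) a"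
    using assms(1) unfolding contains_def occurrence_def by blast
  obtain J where J: "J \<subseteq> {..<length c}" "same_order (nths c J) b"
    using assms(2) unfolding contains_def occurrence_def by blast
  have "same_order (nths (nths c J) I) (nths b I)"
    by (rule same_order_nths[OF _ J(2)]) (simp add: assms(3))
  then have so: "same_order (nths c {i \<in> J. \<exists>j\<in>I. card {i' \<in> J. i' < i} = j}) a"
    unfolding nths_nths using I(2) same_order_trans by blast
  show ?thesis unfolding contains_def occurrence_def
    by (rule exI, rule conjI[OF _ so]) (use J(1) in auto)
qed

lemma contains_same_order:
  assumes "same_order x w" "contains z w" "distinct x"
  shows "contains z x"
proof -
  obtain I where I: "I \<subseteq> {..<length w}" "same_order (nths w I) z"
    using assms(2) unfolding contains_def occurrence_def by blast
  have "same_order (nths x I) (nths w I)" by (rule same_order_nths[OF assms(3,1)])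
  then have "same_order (nths x I) z" using I(2) same_order_trans by blast
  moreover have "I \<subseteq> {..<length x}" using I(1) same_order_length[OF assms(1)] by simp
  ultimately show ?thesis unfolding contains_def occurrence_def by blast
qed

lemma contains_eq:
  assumes "contains a b" "is_perm a" "is_perm b" "length a = length b"
  shows "a = b"
proof -
  obtain I where I: "I \<subseteq> {..<length b}" "same_order (nths b I) a"
    using assms(1) unfolding contains_def occurrence_def by blast
  have "card I = length b" using same_order_length[OF I(2)] length_nths_subset[OF I(1)] assms(4) by simp
  then have "I = {..<length b}" using card_subset_eq[OF _ I(1)] by simp
  then have "same_order b a" using I(2) by simp
  then show ?thesis using same_order_perm_eq assms(2,3) same_order_sym by metis
qed

lemma contains_length_less:
  "contains a b \<Longrightarrow> is_perm a \<Longrightarrow> is_perm b \<Longrightarrow> a \<noteq> b \<Longrightarrow> length a < length b"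
  using contains_eq contains_length le_neq_implies_less by blast

lemma contains_iff: "contains z x \<longleftrightarrow> (\<exists>K. same_order (nths x K) z)"
proof
  assume "\<exists>K. same_order (nths x K) z"
  then obtain K where K: "same_order (nths x K) z" by blast
  have "nths x K = nths x (K \<inter> {..<length x})" by (rule nths_cong_len) auto
  then show "contains z x"
    using K unfolding contains_def occurrence_def by (intro exI[of _ "K \<inter> {..<length x}"]) auto
qed (auto simp: contains_def occurrence_def)

definition perm_interval :: "nat list \<Rightarrow> nat list \<Rightarrow> nat list set" where
  "perm_interval a b = {z. is_perm z \<and> contains a z \<and> contains z b}"

lemma finite_interval: "finite (perm_interval a b)"
proof (rule finite_subset)
  show "perm_interval a b \<subseteq> {xs. set xs \<subseteq> {1..length b} \<and> length xs \<le> length b}"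
    using contains_length by (fastforce simp: perm_interval_def is_perm_def)
  show "finite {xs. set xs \<subseteq> {1..length b} \<and> length xs \<le> length b}"
    by (rule finite_lists_length_le) simp
qed

definition des_label :: "nat list \<Rightarrow> nat \<Rightarrow> nat" where
  "des_label x v = des_before x (pos_of x v)"

lemma des_label_nth: "distinct x \<Longrightarrow> i < length x \<Longrightarrow> des_label x (x ! i) = des_before x i"
  by (simp add: des_label_def pos_of_nth)

(* A permutation lists its values sorted by (descent label, value): the k-th ascending
   run consists of the values with label k, in increasing order. *)
lemma des_label_sorted:
  assumes "distinct x"
  shows "sorted_wrt (\<lambda>a b. (des_label x a, a) < (des_label x b, b)) x"
  unfolding sorted_wrt_iff_nth_less
proof (intro allI impI)
  fix i j assume ij: "i < j" "j < length x"
  have "des_before x i \<le> des_before x j" using ij by (intro des_before_mono) simp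
  moreover have "des_before x i = des_before x j \<Longrightarrow> x ! i < x ! j"
    using des_before_eq_imp_less[OF assms ij(2) ij(1)] by simp
  ultimately have "(des_before x i, x ! i) < (des_before x j, x ! j)"
    by (cases "des_before x i = des_before x j") auto
  then show "(des_label x (x ! i), x ! i) < (des_label x (x ! j), x ! j)"
    using des_label_nth[OF assms] ij by simp
qed

definition des_word :: "nat list \<Rightarrow> nat list" where
  "des_word x = map (des_label x) [1..<Suc (length x)]"

lemma sorted_key_unique:
  fixes K :: "'a \<Rightarrow> 'b::linorder"
  assumes "inj K" "sorted_wrt (\<lambda>a b. K a < K b) xs" "sorted_wrt (\<lambda>a b. K a < K b) ys" "set xs = set ys"
  shows "xs = ys"
proof -
  have "map K xs = map K ys"
    using assms by (intro strict_sorted_equal) (auto simp: sorted_wrt_map)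
  then show ?thesis using inj_map_eq_map[OF assms(1)] by simp
qed

lemma pos_of_mono:
  assumes "sorted_wrt (<) s" "a \<in> set s" "b \<in> set s" "a < b"
  shows "pos_of s a < pos_of s b"
proof (rule ccontr)
  have d: "distinct s" using assms(1) by (simp add: strict_sorted_iff)
  assume "\<not> pos_of s a < pos_of s b"
  then have "s ! pos_of s b \<le> s ! pos_of s a"
    using pos_of_in[OF d assms(2)] assms(1) by (intro sorted_nth_mono) (auto simp: strict_sorted_iff)
  then show False using pos_of_in[OF d assms(2)] pos_of_in[OF d assms(3)] assms(4) by simp
qed

lemma map_pos_of: "distinct s \<Longrightarrow> map (pos_of s) s = [0..<length s]"
  by (rule nth_equalityI) (simp_all add: pos_of_nth)

lemma set_filter_perm:
  "is_perm \<pi> \<Longrightarrow> set (filter (\<lambda>v. v \<in> U) \<pi>) = set (filter (\<lambda>v. v \<in> U) [1..<Suc (length \<pi>)])"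
  by (auto simp: is_perm_def)

(* If the restriction of \<pi> to the values in U is order-isomorphic to z and des z = des \<pi>,
   then the descent word of z is the subword of the descent word of \<pi> on U:
   the isomorphism preserves descent labels because no descent of \<pi> is lost. *)
lemma des_word_if_restriction_same_order:
  assumes pp: "is_perm \<pi>" and pz: "is_perm z" and dd: "des z = des \<pi>"
    and so: "same_order (filter (\<lambda>v. v \<in> U) \<pi>) z"
  shows "des_word z = subword_on (des_label \<pi>) U (length \<pi>)"
proof -
  define y where "y = filter (\<lambda>v. v \<in> U) \<pi>"
  define s where "s = filter (\<lambda>v. v \<in> U) [1..<Suc (length \<pi>)]"
  have dp: "distinct \<pi>" and dz: "distinct z" and sz: "set z = {1..length z}"
    using pp pz by (auto simp: is_perm_def)
  have ys: "set y = set s" unfolding y_def s_def using set_filter_perm[OF pp] .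
  obtain g where g: "\<forall>a\<in>set y. \<forall>b\<in>set y. a < b \<longrightarrow> g a < g b" "z = map g y"
    using same_order_ex_map[OF _ so[folded y_def]] dp by (auto simp: y_def)
  have sts: "sorted_wrt (<) s" unfolding s_def by (rule sorted_wrt_filter, rule sorted_wrt_upt)
  have "sorted_wrt (\<lambda>a b. g a < g b) s"
    by (rule sorted_wrt_mono_rel[OF _ sts]) (use g(1) ys in auto)
  then have "sorted_wrt (<) (map g s)" by (simp add: sorted_wrt_map)
  moreover have "set (map g s) = set [1..<Suc (length z)]"
    using g(2) ys sz by (auto simp del: upt_Suc)
  ultimately have gs: "map g s = [1..<Suc (length z)]"
    by (rule strict_sorted_equal[OF sorted_wrt_upt])
  have "des y = des \<pi>" using same_order_des[OF so[folded y_def]] dd by simp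
  then obtain q where
    q: "\<forall>m<length y. q m < length \<pi> \<and> y ! m = \<pi> ! q m \<and> des_before \<pi> (q m) = des_before y m"
    using des_nths_eq[OF dp, of "{i. i < length \<pi> \<and> \<pi> ! i \<in> U}"] by (auto simp: y_def filter_eq_nths)
  have "des_label z (g v) = des_label \<pi> v" if "v \<in> set y" for v
  proof -
    obtain m where m: "m < length y" "y ! m = v" using \<open>v \<in> set y\<close> by (auto simp: in_set_conv_nth)
    have "des_label z (g v) = des_before z m"
      using des_label_nth[OF dz] m g(2) by auto
    also have "\<dots> = des_before y m" using same_order_des_before[OF so[folded y_def]] by simp
    also have "\<dots> = des_label \<pi> v" using q m des_label_nth[OF dp] by auto
    finally show ?thesis .
  qed
  then have "map (des_label z) (map g s) = map (des_label \<pi>) s" using ys by simp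
  then show ?thesis unfolding des_word_def subword_on_def s_def[symmetric] gs[symmetric] by simp
qed

(* Conversely, a descent word appearing as the subword of \<pi>'s descent word on U forces
   the restriction of \<pi> to U to be order-isomorphic to z: both are sorted by
   (descent label, value), and ranking U transports one key to the other. *)
lemma restriction_same_order_if_des_word:
  assumes pp: "is_perm \<pi>" and pz: "is_perm z"
    and eq: "des_word z = subword_on (des_label \<pi>) U (length \<pi>)"
  shows "same_order (filter (\<lambda>v. v \<in> U) \<pi>) z"
proof -
  define y where "y = filter (\<lambda>v. v \<in> U) \<pi>"
  define s where "s = filter (\<lambda>v. v \<in> U) [1..<Suc (length \<pi>)]"
  define g where "g v = Suc (pos_of s v)" for v
  have dp: "distinct \<pi>" and dz: "distinct z" and sz: "set z = {1..length z}"
    using pp pz by (auto simp: is_perm_def)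
  have ys: "set y = set s" unfolding y_def s_def using set_filter_perm[OF pp] .
  have sts: "sorted_wrt (<) s" unfolding s_def by (rule sorted_wrt_filter, rule sorted_wrt_upt)
  have "map g s = map Suc (map (pos_of s) s)" by (simp add: g_def)
  also have "\<dots> = [1..<Suc (length s)]"
    using map_pos_of[of s] sts by (simp only: strict_sorted_iff map_Suc_upt) simp
  finally have gs: "map g s = [1..<Suc (length s)]" .
  have eq': "map (des_label z) [1..<Suc (length z)] = map (des_label \<pi>) s"
    using eq by (simp add: des_word_def subword_on_def s_def)
  then have ls: "length s = length z" by (metis length_map length_upt diff_Suc_1)
  have glab: "des_label z (g v) = des_label \<pi> v" if "v \<in> set s" for v
    using eq' that unfolding gs[symmetric] ls[symmetric] by (simp add: map_eq_conv)
  have gmono: "g a < g b" if "a \<in> set y" "b \<in> set y" "a < b" for a b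
    using pos_of_mono[OF sts] that ys by (simp add: g_def)
  define K where "K a = (des_label z a, a)" for a
  have "sorted_wrt (\<lambda>a b. K (g a) < K (g b)) y"
  proof (rule sorted_wrt_mono_rel)
    show "sorted_wrt (\<lambda>a b. (des_label \<pi> a, a) < (des_label \<pi> b, b)) y"
      unfolding y_def by (rule sorted_wrt_filter, rule des_label_sorted[OF dp])
  next
    fix a b assume ab: "a \<in> set y" "b \<in> set y" "(des_label \<pi> a, a) < (des_label \<pi> b, b)"
    then show "K (g a) < K (g b)"
      using glab gmono[OF ab(1,2)] ys unfolding K_def by auto
  qed
  then have "map g y = z"
  proof (intro sorted_key_unique[of K])
    show "inj K" by (auto simp: inj_def K_def)
    show "sorted_wrt (\<lambda>a b. K a < K b) z" using des_label_sorted[OF dz] by (simp add: K_def)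
    have "set (map g y) = set (map g s)" using ys by simp
    then show "set (map g y) = set z" using gs ls sz by auto
  qed (simp add: sorted_wrt_map)
  moreover have "same_order y (map g y)" by (rule same_order_map) (use gmono in auto)
  ultimately show ?thesis by (simp add: y_def)
qed

lemma restriction_same_order_iff:
  assumes "is_perm \<pi>" "is_perm z" "des z = des \<pi>"
  shows "same_order (filter (\<lambda>v. v \<in> U) \<pi>) z \<longleftrightarrow> des_word z = subword_on (des_label \<pi>) U (length \<pi>)"
  using des_word_if_restriction_same_order[OF assms] restriction_same_order_if_des_word[OF assms(1,2)]
  by blast

(* For permutations with equal descent numbers, containment in a restriction of \<pi> is
   subword containment of descent words: the restrictions of nths \<pi> I are exactly the
   restrictions of \<pi> to value sets inside \<pi> ` I. *)
lemma contains_restriction_iff_subseq: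
  assumes pp: "is_perm \<pi>" and pz: "is_perm z" and dd: "des z = des \<pi>"
    and I: "I \<subseteq> {..<length \<pi>}"
  shows "contains z (nths \<pi> I) \<longleftrightarrow> subseq (des_word z) (subword_on (des_label \<pi>) ((!) \<pi> ` I) (length \<pi>))"
proof -
  define V where "V = (!) \<pi> ` I"
  define L where "L = [1..<Suc (length \<pi>)]"
  have dp: "distinct \<pi>" using pp by (simp add: is_perm_def)
  have "I \<inter> {..<length \<pi>} = I" using I by auto
  then have nf: "nths \<pi> I = filter (\<lambda>v. v \<in> V) \<pi>" using nths_distinct_filter[OF dp, of I] V_def by simp
  have "contains z (nths \<pi> I) \<longleftrightarrow> (\<exists>K. same_order (nths (filter (\<lambda>v. v \<in> V) \<pi>) K) z)"
    unfolding contains_iff nf ..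
  also have "\<dots> \<longleftrightarrow> (\<exists>W. same_order (filter (\<lambda>v. v \<in> W) (filter (\<lambda>v. v \<in> V) \<pi>)) z)"
    by (rule ex_nths_filter) (simp add: dp)
  also have "\<dots> \<longleftrightarrow> (\<exists>W. same_order (filter (\<lambda>v. v \<in> {v. v \<in> V \<and> v \<in> W}) \<pi>) z)"
    by simp
  also have "\<dots> \<longleftrightarrow> (\<exists>W. des_word z = subword_on (des_label \<pi>) {v. v \<in> V \<and> v \<in> W} (length \<pi>))"
    by (simp only: restriction_same_order_iff[OF pp pz dd])
  also have "\<dots> \<longleftrightarrow> (\<exists>W. des_word z = map (des_label \<pi>) (filter (\<lambda>v. v \<in> W) (filter (\<lambda>v. v \<in> V) L)))"
    by (simp add: subword_on_def L_def)
  also have "\<dots> \<longleftrightarrow> (\<exists>N. des_word z = map (des_label \<pi>) (nths (filter (\<lambda>v. v \<in> V) L) N))"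
    by (rule ex_nths_filter[symmetric]) (simp add: L_def)
  also have "\<dots> \<longleftrightarrow> subseq (des_word z) (subword_on (des_label \<pi>) V (length \<pi>))"
    unfolding subseq_conv_nths subword_on_def L_def nths_map by simp
  finally show ?thesis unfolding V_def .
qed

lemma adj_tail_value_repeats:
  assumes pp: "is_perm \<pi>" and i: "in_adj_tail \<pi> i"
  shows "\<pi> ! i \<in> repeat_positions (des_label \<pi>) (length \<pi>)"
proof -
  have dp: "distinct \<pi>" and sp: "set \<pi> = {1..length \<pi>}" using pp by (auto simp: is_perm_def)
  have i0: "0 < i" "i < length \<pi>" "\<pi> ! i = \<pi> ! (i - 1) + 1" using i by (auto simp: in_adj_tail_def)
  have "\<pi> ! (i - 1) \<in> {1..length \<pi>}" "\<pi> ! i \<in> {1..length \<pi>}"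
    using sp i0 nth_mem[of "i - 1" \<pi>] nth_mem[of i \<pi>] by auto
  moreover have "des_before \<pi> i = des_before \<pi> (i - 1)"
    using des_before_Suc[of \<pi> "i - 1"] i0 by simp
  then have "des_label \<pi> (\<pi> ! i) = des_label \<pi> (\<pi> ! (i - 1))"
    using des_label_nth[OF dp] i0(1,2) by simp
  ultimately show ?thesis using i0(3) by (simp add: repeat_positions_def)
qed

(* Conversely, if values v-1 and v have the same descent label they lie in one ascending
   run, where no other value fits between them; so v follows v-1 directly. *)
lemma repeat_value_at_adj_tail:
  assumes pp: "is_perm \<pi>" and v: "v \<in> repeat_positions (des_label \<pi>) (length \<pi>)"
  shows "\<exists>i. in_adj_tail \<pi> i \<and> \<pi> ! i = v"
proof -
  have dp: "distinct \<pi>" and sp: "set \<pi> = {1..length \<pi>}" using pp by (auto simp: is_perm_def)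
  have v: "2 \<le> v" "v \<le> length \<pi>" "des_label \<pi> v = des_label \<pi> (v - 1)"
    using v by (auto simp: repeat_positions_def)
  then have "v \<in> set \<pi>" "v - 1 \<in> set \<pi>" using sp by auto
  then obtain i p where ip: "i < length \<pi>" "\<pi> ! i = v" "p < length \<pi>" "\<pi> ! p = v - 1"
    by (auto simp: in_set_conv_nth)
  have same: "des_before \<pi> i = des_before \<pi> p" using v(3) des_label_nth[OF dp] ip by metis
  have "\<not> i < p" using des_before_eq_imp_less[OF dp ip(3) _ same] ip v by auto
  moreover have "i \<noteq> p" using ip v by auto
  ultimately have pi: "p < i" by simp
  have "p = i - 1"
  proof (rule ccontr)
    assume "p \<noteq> i - 1"
    then have pt: "p < i - 1" "i - 1 < i" using pi by auto
    then have "des_before \<pi> p \<le> des_before \<pi> (i - 1)" "des_before \<pi> (i - 1) \<le> des_before \<pi> i"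
      by (auto intro: des_before_mono)
    then have e: "des_before \<pi> p = des_before \<pi> (i - 1)" "des_before \<pi> (i - 1) = des_before \<pi> i"
      using same by auto
    have "\<pi> ! p < \<pi> ! (i - 1)" using des_before_eq_imp_less[OF dp _ pt(1) e(1)] ip pt by simp
    moreover have "\<pi> ! (i - 1) < \<pi> ! i" using des_before_eq_imp_less[OF dp ip(1) pt(2) e(2)] .
    ultimately show False using ip v by simp
  qed
  then have "in_adj_tail \<pi> i" using pi ip v by (auto simp: in_adj_tail_def)
  then show ?thesis using ip by blast
qed

lemma adj_tail_values:
  "is_perm \<pi> \<Longrightarrow> (!) \<pi> ` {i. in_adj_tail \<pi> i} = repeat_positions (des_label \<pi>) (length \<pi>)"
  using adj_tail_value_repeats repeat_value_at_adj_tail by fastforce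

lemma adj_tails_subset_iff:
  assumes pp: "is_perm \<pi>" and I: "I \<subseteq> {..<length \<pi>}"
  shows "(\<forall>i. in_adj_tail \<pi> i \<longrightarrow> i \<in> I) \<longleftrightarrow> repeat_positions (des_label \<pi>) (length \<pi>) \<subseteq> (!) \<pi> ` I"
proof -
  have inj: "inj_on ((!) \<pi>) {..<length \<pi>}" using pp by (simp add: inj_on_nth is_perm_def)
  have tails: "{i. in_adj_tail \<pi> i} \<subseteq> {..<length \<pi>}" by (auto simp: in_adj_tail_def)
  have "(\<forall>i. in_adj_tail \<pi> i \<longrightarrow> i \<in> I) \<longleftrightarrow> (!) \<pi> ` {i. in_adj_tail \<pi> i} \<subseteq> (!) \<pi> ` I"
    using inj_on_image_mem_iff[OF inj _ I] tails by blast
  then show ?thesis using adj_tail_values[OF pp] by simp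
qed

lemma des_word_eq_iff:
  assumes pp: "is_perm \<pi>" and pz: "is_perm z" and dd: "des z = des \<pi>"
  shows "des_word z = des_word \<pi> \<longleftrightarrow> z = \<pi>"
proof
  assume "des_word z = des_word \<pi>"
  then have "same_order (filter (\<lambda>v. v \<in> UNIV) \<pi>) z"
    using restriction_same_order_iff[OF pp pz dd, of UNIV] by (simp add: des_word_def subword_on_def)
  then show "z = \<pi>" using same_order_perm_eq[OF pp pz] by simp
qed simp

(* Translating positions to values turns it
   into the subword alternating sum of the descent word of \<pi>. *)
lemma tail_occurrence_alt_sum:
  assumes pp: "is_perm \<pi>" and pz: "is_perm z" and dd: "des z = des \<pi>"
  shows "(\<Sum>I\<in>Pow {..<length \<pi>}. if (\<forall>i. in_adj_tail \<pi> i \<longrightarrow> i \<in> I) \<and> contains z (nths \<pi> I)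
            then (-1::int) ^ (length \<pi> - card I) else 0) = (if z = \<pi> then 1 else 0)"
proof -
  define n where "n = length \<pi>"
  have dp: "distinct \<pi>" and sp: "set \<pi> = {1..n}" using pp by (auto simp: is_perm_def n_def)
  have bij: "bij_betw (image ((!) \<pi>)) (Pow {..<n}) (Pow {1..n})"
    by (rule bij_betw_Pow, rule bij_betw_nth) (use dp sp n_def in auto)
  have inj: "inj_on ((!) \<pi>) {..<n}" using dp by (simp add: inj_on_nth n_def)
  let ?F = "alt_term (des_label \<pi>) n (des_word z)"
  have "(\<Sum>I\<in>Pow {..<n}. if (\<forall>i. in_adj_tail \<pi> i \<longrightarrow> i \<in> I) \<and> contains z (nths \<pi> I)
            then (-1::int) ^ (n - card I) else 0) = (\<Sum>I\<in>Pow {..<n}. ?F ((!) \<pi> ` I))"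
  proof (rule sum.cong[OF refl])
    fix I assume "I \<in> Pow {..<n}"
    then have I: "I \<subseteq> {..<length \<pi>}" using n_def by simp
    have "card ((!) \<pi> ` I) = card I" using card_image[OF inj_on_subset[OF inj]] I n_def by simp
    then show "(if (\<forall>i. in_adj_tail \<pi> i \<longrightarrow> i \<in> I) \<and> contains z (nths \<pi> I)
            then (-1::int) ^ (n - card I) else 0) = ?F ((!) \<pi> ` I)"
      using adj_tails_subset_iff[OF pp I] contains_restriction_iff_subseq[OF pp pz dd I] n_def
      by (simp add: alt_term_def)
  qed
  also have "\<dots> = subword_alt_sum (des_label \<pi>) n (des_word z)"
    unfolding subword_alt_sum_def by (rule sum.reindex_bij_betw[OF bij])
  also have "\<dots> = (if z = \<pi> then 1 else 0)"
    using des_word_eq_iff[OF pp pz dd] by (simp add: subword_alt_sum_eq des_word_def n_def)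
  finally show ?thesis unfolding n_def .
qed

definition support :: "nat list \<Rightarrow> nat set" where
  "support \<eta> = {i. i < length \<eta> \<and> \<eta> ! i \<noteq> 0}"

definition normal_occurrences :: "nat list \<Rightarrow> nat list \<Rightarrow> nat set set" where
  "normal_occurrences w \<pi> = {I. occurrence w \<pi> I \<and> (\<forall>i. in_adj_tail \<pi> i \<longrightarrow> i \<in> I)}"

lemma eq_if_same_support_filter:
  "length a = length b \<Longrightarrow> support a = support b \<Longrightarrow>
   filter (\<lambda>x. x \<noteq> (0::nat)) a = filter (\<lambda>x. x \<noteq> 0) b \<Longrightarrow> a = b"
proof (induction a arbitrary: b)
  case Nil then show ?case by simp
next
  case (Cons x a)
  then obtain y b' where b: "b = y # b'" by (cases b) auto
  have supp: "(x \<noteq> 0 \<longleftrightarrow> y \<noteq> 0) \<and> support a = support b'"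
  proof -
    have "i \<in> support (x # a) \<longleftrightarrow> i \<in> support (y # b')" for i using Cons.prems(2) b by simp
    from this[of 0] this[of "Suc i" for i] Cons.prems(1) b show ?thesis
      by (auto simp: support_def)
  qed
  then show ?case using Cons.IH[of b'] Cons.prems b by (cases "x = 0") auto
qed

lemma support_snoc:
  "support (\<eta> @ [x]) = (if x = 0 then support \<eta> else insert (length \<eta>) (support \<eta>))"
  by (auto simp: support_def nth_append less_Suc_eq)

lemma embedding_exists:
  "I \<subseteq> {..<n} \<Longrightarrow> length w = card I \<Longrightarrow> 0 \<notin> set w \<Longrightarrow>
   \<exists>\<eta>. length \<eta> = n \<and> support \<eta> = I \<and> filter (\<lambda>x. x \<noteq> (0::nat)) \<eta> = w"
proof (induction n arbitrary: I w)
  case 0 then show ?case by (intro exI[of _ "[]"]) (auto simp: support_def)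
next
  case (Suc n)
  show ?case
  proof (cases "n \<in> I")
    case True
    define I' where "I' = I - {n}"
    have I': "I' \<subseteq> {..<n}" and II': "I = insert n I'" using Suc.prems(1) True I'_def by auto
    have "card I = Suc (card I')"
      using card_Suc_Diff1[OF finite_subset[OF Suc.prems(1) finite_lessThan] True] I'_def by simp
    then obtain w' x where w: "w = w' @ [x]" using Suc.prems(2) by (cases w rule: rev_exhaust) auto
    have lw: "length w' = card I'" using Suc.prems(2) \<open>card I = Suc (card I')\<close> w by simp
    have x0: "x \<noteq> 0" "0 \<notin> set w'" using Suc.prems(3) w by auto
    obtain \<eta> where \<eta>: "length \<eta> = n" "support \<eta> = I'" "filter (\<lambda>x. x \<noteq> 0) \<eta> = w'"
      using Suc.IH[OF I' lw x0(2)] by blast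
    show ?thesis
      using \<eta> w x0 II' by (intro exI[of _ "\<eta> @ [x]"]) (simp add: support_snoc)
  next
    case False
    have I': "I \<subseteq> {..<n}" using Suc.prems(1) False by (auto simp: less_Suc_eq)
    obtain \<eta> where \<eta>: "length \<eta> = n" "support \<eta> = I" "filter (\<lambda>x. x \<noteq> 0) \<eta> = w"
      using Suc.IH[OF I' Suc.prems(2,3)] by blast
    show ?thesis
      using \<eta> by (intro exI[of _ "\<eta> @ [0]"]) (simp add: support_snoc)
  qed
qed

lemma inj_on_support_normal_embeddings: "inj_on support (normal_embeddings w \<pi>)"
proof (rule inj_onI)
  fix a b assume ab: "a \<in> normal_embeddings w \<pi>" "b \<in> normal_embeddings w \<pi>"
    and same_support: "support a = support b"
  have "length a = length b" "filter (\<lambda>x. x \<noteq> 0) a = filter (\<lambda>x. x \<noteq> 0) b"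
    using ab by (simp_all add: normal_embeddings_def embeddings_def)
  then show "a = b" using eq_if_same_support_filter same_support by blast
qed

lemma support_normal_embeddings:
  assumes pw: "is_perm w"
  shows "support ` normal_embeddings w \<pi> = normal_occurrences w \<pi>"
proof
  show "support ` normal_embeddings w \<pi> \<subseteq> normal_occurrences w \<pi>"
  proof
    fix I assume "I \<in> support ` normal_embeddings w \<pi>"
    then obtain \<eta> where \<eta>: "\<eta> \<in> normal_embeddings w \<pi>" "I = support \<eta>" by blast
    have "occurrence w \<pi> I"
      unfolding \<eta>(2) support_def using \<eta>(1) by (auto simp: normal_embeddings_def embeddings_def)
    moreover have "length \<eta> = length \<pi>" "\<forall>i. in_adj_tail \<pi> i \<longrightarrow> \<eta> ! i \<noteq> 0"
      using \<eta>(1) by (simp_all add: normal_embeddings_def embeddings_def)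
    ultimately show "I \<in> normal_occurrences w \<pi>"
      using \<eta>(2) by (auto simp: normal_occurrences_def support_def in_adj_tail_def)
  qed
next
  show "normal_occurrences w \<pi> \<subseteq> support ` normal_embeddings w \<pi>"
  proof
    fix I assume "I \<in> normal_occurrences w \<pi>"
    then have I: "I \<subseteq> {..<length \<pi>}" "same_order (nths \<pi> I) w" "\<forall>i. in_adj_tail \<pi> i \<longrightarrow> i \<in> I"
      by (auto simp: normal_occurrences_def occurrence_def)
    have "length w = card I" using same_order_length[OF I(2)] length_nths_subset[OF I(1)] by simp
    moreover have "0 \<notin> set w" using pw by (auto simp: is_perm_def)
    ultimately obtain \<eta> where \<eta>: "length \<eta> = length \<pi>" "support \<eta> = I" "filter (\<lambda>x. x \<noteq> 0) \<eta> = w"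
      using embedding_exists[OF I(1)] by blast
    moreover have "\<eta> ! i \<noteq> 0" if "in_adj_tail \<pi> i" for i
      using that I(3) \<eta>(1,2) by (auto simp: support_def in_adj_tail_def)
    moreover have "{i. i < length \<eta> \<and> \<eta> ! i \<noteq> 0} = I" using \<eta>(2) by (simp add: support_def)
    ultimately have "\<eta> \<in> normal_embeddings w \<pi>"
      using I(1,2) unfolding normal_embeddings_def embeddings_def occurrence_def by simp
    then show "I \<in> support ` normal_embeddings w \<pi>" using \<eta>(2) by blast
  qed
qed

lemma card_normal_embeddings:
  "is_perm w \<Longrightarrow> card (normal_embeddings w \<pi>) = card (normal_occurrences w \<pi>)"
  using card_image[OF inj_on_support_normal_embeddings] support_normal_embeddings by metis

definition signed_normal_count :: "nat list \<Rightarrow> nat list \<Rightarrow> int" where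
  "signed_normal_count w \<pi> = (-1) ^ (length \<pi> - length w) * int (card (normal_embeddings w \<pi>))"

lemma signed_normal_count_as_sum:
  assumes "is_perm w"
  shows "signed_normal_count w \<pi> = (\<Sum>I\<in>normal_occurrences w \<pi>. (-1) ^ (length \<pi> - card I))"
proof -
  have "card I = length w" if "I \<in> normal_occurrences w \<pi>" for I
  proof -
    have "I \<subseteq> {..<length \<pi>}" "same_order (nths \<pi> I) w"
      using that by (auto simp: normal_occurrences_def occurrence_def)
    then show ?thesis using same_order_length length_nths_subset by metis
  qed
  then have "(\<Sum>I\<in>normal_occurrences w \<pi>. (-1::int) ^ (length \<pi> - card I))
      = int (card (normal_occurrences w \<pi>)) * (-1) ^ (length \<pi> - length w)"
    by simp
  then show ?thesis
    using card_normal_embeddings[OF assms] by (simp add: signed_normal_count_def)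
qed

lemma normal_occurrences_disjoint:
  assumes "is_perm w1" "is_perm w2" "w1 \<noteq> w2"
  shows "normal_occurrences w1 \<pi> \<inter> normal_occurrences w2 \<pi> = {}"
proof (rule ccontr)
  assume "normal_occurrences w1 \<pi> \<inter> normal_occurrences w2 \<pi> \<noteq> {}"
  then obtain I where "same_order (nths \<pi> I) w1" "same_order (nths \<pi> I) w2"
    by (auto simp: normal_occurrences_def occurrence_def)
  then have "same_order w1 w2" using same_order_sym same_order_trans by blast
  then show False using same_order_perm_eq assms by blast
qed

lemma normal_occurrences_Union:
  assumes pp: "is_perm \<pi>"
  shows "(\<Union>w\<in>perm_interval z \<pi>. normal_occurrences w \<pi>)
       = {I \<in> Pow {..<length \<pi>}. (\<forall>i. in_adj_tail \<pi> i \<longrightarrow> i \<in> I) \<and> contains z (nths \<pi> I)}"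
proof
  have dp: "distinct \<pi>" using pp by (simp add: is_perm_def)
  show "(\<Union>w\<in>perm_interval z \<pi>. normal_occurrences w \<pi>)
      \<subseteq> {I \<in> Pow {..<length \<pi>}. (\<forall>i. in_adj_tail \<pi> i \<longrightarrow> i \<in> I) \<and> contains z (nths \<pi> I)}"
  proof
    fix I assume "I \<in> (\<Union>w\<in>perm_interval z \<pi>. normal_occurrences w \<pi>)"
    then obtain w where w: "w \<in> perm_interval z \<pi>" "I \<in> normal_occurrences w \<pi>" by blast
    then have I: "I \<subseteq> {..<length \<pi>}" "\<forall>i. in_adj_tail \<pi> i \<longrightarrow> i \<in> I" "same_order (nths \<pi> I) w"
      by (auto simp: normal_occurrences_def occurrence_def)
    have "contains z (nths \<pi> I)"
      using contains_same_order[OF I(3)] w(1) dp by (simp add: perm_interval_def)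
    then show "I \<in> {I \<in> Pow {..<length \<pi>}. (\<forall>i. in_adj_tail \<pi> i \<longrightarrow> i \<in> I) \<and> contains z (nths \<pi> I)}"
      using I by simp
  qed
  show "{I \<in> Pow {..<length \<pi>}. (\<forall>i. in_adj_tail \<pi> i \<longrightarrow> i \<in> I) \<and> contains z (nths \<pi> I)}
      \<subseteq> (\<Union>w\<in>perm_interval z \<pi>. normal_occurrences w \<pi>)"
  proof
    fix I assume "I \<in> {I \<in> Pow {..<length \<pi>}. (\<forall>i. in_adj_tail \<pi> i \<longrightarrow> i \<in> I) \<and> contains z (nths \<pi> I)}"
    then have I: "I \<subseteq> {..<length \<pi>}" "\<forall>i. in_adj_tail \<pi> i \<longrightarrow> i \<in> I" "contains z (nths \<pi> I)" by auto
    obtain w where w: "is_perm w" "same_order (nths \<pi> I) w"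
      using same_order_standardize[of "nths \<pi> I"] dp by auto
    have "contains z w" using contains_same_order[OF same_order_sym[OF w(2)] I(3)] w(1)
      by (simp add: is_perm_def)
    moreover have "contains w \<pi>" using I(1) w(2) unfolding contains_def occurrence_def by blast
    ultimately have "w \<in> perm_interval z \<pi>" using w(1) by (simp add: perm_interval_def)
    moreover have "I \<in> normal_occurrences w \<pi>"
      using I w by (simp add: normal_occurrences_def occurrence_def)
    ultimately show "I \<in> (\<Union>w\<in>perm_interval z \<pi>. normal_occurrences w \<pi>)" by blast
  qed
qed

lemma interval_signed_normal_count_sum:
  assumes pp: "is_perm \<pi>"
  shows "(\<Sum>w\<in>perm_interval z \<pi>. signed_normal_count w \<pi>)
       = (\<Sum>I\<in>Pow {..<length \<pi>}. if (\<forall>i. in_adj_tail \<pi> i \<longrightarrow> i \<in> I) \<and> contains z (nths \<pi> I)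
            then (-1::int) ^ (length \<pi> - card I) else 0)"
proof -
  let ?f = "\<lambda>I::nat set. (-1::int) ^ (length \<pi> - card I)"
  have fin: "finite (normal_occurrences w \<pi>)" for w
    by (rule finite_subset[of _ "Pow {..<length \<pi>}"]) (auto simp: normal_occurrences_def occurrence_def)
  have "(\<Sum>w\<in>perm_interval z \<pi>. signed_normal_count w \<pi>)
      = (\<Sum>w\<in>perm_interval z \<pi>. sum ?f (normal_occurrences w \<pi>))"
    by (rule sum.cong) (auto simp: perm_interval_def signed_normal_count_as_sum)
  also have "\<dots> = sum ?f (\<Union>w\<in>perm_interval z \<pi>. normal_occurrences w \<pi>)"
    using finite_interval fin normal_occurrences_disjoint
    by (intro sum.UNION_disjoint[symmetric]) (auto simp: perm_interval_def)
  also have "\<dots> = (\<Sum>I\<in>Pow {..<length \<pi>}. if (\<forall>i. in_adj_tail \<pi> i \<longrightarrow> i \<in> I) \<and> contains z (nths \<pi> I)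
            then ?f I else 0)"
    unfolding normal_occurrences_Union[OF pp] by (rule sum.inter_filter) simp
  finally show ?thesis .
qed

(* The recursion equation of pmu would unfold indefinitely under simp; use it explicitly. *)
declare pmu.simps[simp del]

lemma pmu_interval_sum:
  assumes pa: "is_perm a" and pw: "is_perm w" and c: "contains a w"
  shows "(\<Sum>z\<in>perm_interval a w. pmu a z) = (if a = w then 1 else 0)"
proof (cases "a = w")
  case True
  have "z = a" if "z \<in> perm_interval a w" for z
  proof -
    have "length z = length a"
      using that True contains_length[of a z] contains_length[of z a] by (auto simp: perm_interval_def)
    then show ?thesis using that contains_eq[of a z] pa by (auto simp: perm_interval_def)
  qed
  then have "perm_interval a w = {a}" using pa True contains_refl by (auto simp: perm_interval_def)
  moreover have "pmu a a = 1" by (subst pmu.simps) simp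
  ultimately show ?thesis using True by simp
next
  case False
  define D where "D = {z. is_perm z \<and> contains a z \<and> contains z w \<and> z \<noteq> w \<and> length z < length w}"
  have interval: "perm_interval a w = insert w D"
    using pw c contains_refl contains_length_less by (auto simp: perm_interval_def D_def)
  have "finite D"
    by (rule finite_subset[OF _ finite_interval[of a w]]) (auto simp: D_def perm_interval_def)
  moreover have "w \<notin> D" by (simp add: D_def)
  moreover have "pmu a w = - (\<Sum>z\<in>D. pmu a z)"
    by (subst pmu.simps) (simp add: False c D_def)
  ultimately show ?thesis unfolding interval using False by simp
qed

lemma incidence_inverses_agree:
  fixes m g :: "'a \<Rightarrow> 'b::comm_ring_1"
  assumes fin: "finite P" and s: "s \<in> P" and t: "t \<in> P"
    and m: "\<And>w. w \<in> P \<Longrightarrow> (\<Sum>z\<in>{z \<in> P. le z w}. m z) = (if s = w then 1 else 0)"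
    and g: "\<And>z. z \<in> P \<Longrightarrow> (\<Sum>w\<in>{w \<in> P. le z w}. g w) = (if z = t then 1 else 0)"
  shows "m t = g s"
proof -
  have "m t = (\<Sum>z\<in>P. if z = t then m z else 0)"
    using t fin by (simp add: sum.delta)
  also have "\<dots> = (\<Sum>z\<in>P. m z * (if z = t then 1 else 0))"
    by (rule sum.cong) simp_all
  also have "\<dots> = (\<Sum>z\<in>P. \<Sum>w\<in>{w \<in> P. le z w}. m z * g w)"
  proof (rule sum.cong[OF refl])
    fix z assume "z \<in> P"
    show "m z * (if z = t then 1 else 0) = (\<Sum>w\<in>{w \<in> P. le z w}. m z * g w)"
      by (simp only: g[OF \<open>z \<in> P\<close>, symmetric] sum_distrib_left)
  qed
  also have "\<dots> = (\<Sum>w\<in>P. \<Sum>z\<in>{z \<in> P. le z w}. m z * g w)"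
    by (rule sum.swap_restrict[OF fin fin])
  also have "\<dots> = (\<Sum>w\<in>P. (if s = w then 1 else 0) * g w)"
  proof (rule sum.cong[OF refl])
    fix w assume "w \<in> P"
    show "(\<Sum>z\<in>{z \<in> P. le z w}. m z * g w) = (if s = w then 1 else 0) * g w"
      by (simp only: m[OF \<open>w \<in> P\<close>, symmetric] sum_distrib_right)
  qed
  also have "\<dots> = (\<Sum>w\<in>P. if s = w then g w else 0)"
    by (rule sum.cong) simp_all
  also have "\<dots> = g s"
    using s fin by (simp add: sum.delta)
  finally show ?thesis .
qed

lemma perm_interval_restrict:
  assumes "z \<in> perm_interval a b" "distinct b"
  shows "{w \<in> perm_interval a b. contains z w} = perm_interval z b"
    and "{w \<in> perm_interval a b. contains w z} = perm_interval a z"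
  using assms contains_trans by (auto simp: perm_interval_def is_perm_def)

(* Containment cannot decrease the number of descents, so it is constant on [a, b]
   when des a = des b. *)
lemma des_in_interval:
  assumes "z \<in> perm_interval a b" "is_perm b" "des a = des b"
  shows "des z = des b"
  using assms contains_des[of a z] contains_des[of z b] by (auto simp: perm_interval_def is_perm_def)

lemma signed_normal_count_interval_sum:
  assumes "is_perm \<pi>" "is_perm z" "des z = des \<pi>"
  shows "(\<Sum>w\<in>perm_interval z \<pi>. signed_normal_count w \<pi>) = (if z = \<pi> then 1 else 0)"
  using interval_signed_normal_count_sum[OF assms(1)] tail_occurrence_alt_sum[OF assms] by simp

theorem mainTheorem6:
  assumes "is_perm \<sigma>" and "is_perm \<pi>" and "des \<sigma> = des \<pi>"
  shows "pmu \<sigma> \<pi> = (-1) ^ (length \<pi> - length \<sigma>) * int (card (normal_embeddings \<sigma> \<pi>))"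
proof (cases "contains \<sigma> \<pi>")
  case False
  then have "normal_embeddings \<sigma> \<pi> = {}"
    by (auto simp: normal_embeddings_def embeddings_def contains_def)
  moreover have "pmu \<sigma> \<pi> = 0" using False contains_refl by (subst pmu.simps) auto
  ultimately show ?thesis by simp
next
  case True
  let ?P = "perm_interval \<sigma> \<pi>"
  have dp: "distinct \<pi>" using assms(2) by (simp add: is_perm_def)
  have ends: "\<sigma> \<in> ?P" "\<pi> \<in> ?P" using assms True contains_refl by (auto simp: perm_interval_def)
  have "pmu \<sigma> \<pi> = signed_normal_count \<sigma> \<pi>"
  proof (rule incidence_inverses_agree[OF finite_interval ends, where le = contains])
    fix w assume "w \<in> ?P"
    then show "(\<Sum>z\<in>{z \<in> ?P. contains z w}. pmu \<sigma> z) = (if \<sigma> = w then 1 else 0)"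
      using perm_interval_restrict(2)[OF _ dp] pmu_interval_sum[OF assms(1)]
      by (simp add: perm_interval_def)
  next
    fix z assume "z \<in> ?P"
    then show "(\<Sum>w\<in>{w \<in> ?P. contains z w}. signed_normal_count w \<pi>) = (if z = \<pi> then 1 else 0)"
      using perm_interval_restrict(1)[OF _ dp] signed_normal_count_interval_sum[OF assms(2)]
        des_in_interval[OF _ assms(2,3)] by (simp add: perm_interval_def)
  qed
  then show ?thesis by (simp add: signed_normal_count_def)
qed

end
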